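(* Let $(\mathcal B,<)$ be a monoidal poset, $B\in\mathcal B$, and $i\ne k$ nodes with $r_iB=r_kB>B$. If $\beta$ is an element of $B$ of smallest height among the elements of $B$ moved by $r_i$ or $r_k$, then $\beta+\alpha_i+\alpha_k\in B$. Furthermore $i\not\sim k$.
   Context: Setting: $M$ is a spherical simply laced Coxeter diagram with nodes $1,\dots,n$ ($i\sim j$: distinct adjacent nodes; $i\not\sim j$ otherwise); $W$ its Weyl group with positive roots $\Phi^+$, fundamental roots $\alpha_i$, reflections $r_i$, inner product with $(\alpha_i,\alpha_i)=2$, $(\alpha_i,\alpha_j)=-1$ if $i\sim j$, $0$ otherwise; height $\mathrm{ht}(\sum a_k\alpha_k)=\sum a_k$. A root $\beta$ is moved by $r_i$ if $(\alpha_i,\beta)=\pm1$. For a set $B$ of mutually orthogonal positive roots, $wB=\Phi^+\cap\{\pm w\beta:\beta\in B\}$. A $W$-orbit $\mathcal B$ of such sets is admissible if for every $B\in\mathcal B$, all nodes $i\not\sim j$ and root $\gamma$ with $\gamma,\gamma-\alpha_i+\alpha_j\in B$, $r_iB=r_jB$. For $B,C\in\mathcal B$ write $B\prec C$ if $B\ne C$ and the minimal height of an element of $B\setminus C$ is strictly smaller than the minimal height of an element of $C\setminus B$. For admissible $\mathcal B$, the monoidal poset $(\mathcal B,<)$ is $\mathcal B$ with the partial order $<$ given by the transitive closure of $\{(B,r_jB): B\in\mathcal B,\ j\text{ a node},\ B\prec r_jB\}$; $>$ is the reverse relation. *)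

theory Defs
  imports Main
begin

text \<open>Vectors in the root lattice are functions
  nat => int, the coefficients with respect to the fundamental roots alpha_1..alpha_n.\<close>

type_synonym vec = "nat \<Rightarrow> int"

definition nodes :: "nat \<Rightarrow> nat set" where
  "nodes n = {1..n}"

definition diagram :: "nat \<Rightarrow> (nat \<Rightarrow> nat \<Rightarrow> bool) \<Rightarrow> bool" where
  "diagram n adj \<longleftrightarrow> (\<forall>i\<in>nodes n. \<forall>j\<in>nodes n. adj i j \<longleftrightarrow> adj j i) \<and> (\<forall>i\<in>nodes n. \<not> adj i i)"

definition alpha :: "nat \<Rightarrow> vec" where
  "alpha i = (\<lambda>k. if k = i then 1 else 0)"

definition cartan :: "(nat \<Rightarrow> nat \<Rightarrow> bool) \<Rightarrow> nat \<Rightarrow> nat \<Rightarrow> int" where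
  "cartan adj i j = (if i = j then 2 else if adj i j then -1 else 0)"

definition ip :: "nat \<Rightarrow> (nat \<Rightarrow> nat \<Rightarrow> bool) \<Rightarrow> vec \<Rightarrow> vec \<Rightarrow> int" where
  "ip n adj v w = (\<Sum>i\<in>nodes n. \<Sum>j\<in>nodes n. v i * w j * cartan adj i j)"

definition height :: "nat \<Rightarrow> vec \<Rightarrow> int" where
  "height n v = (\<Sum>k\<in>nodes n. v k)"

definition refl :: "nat \<Rightarrow> (nat \<Rightarrow> nat \<Rightarrow> bool) \<Rightarrow> nat \<Rightarrow> vec \<Rightarrow> vec" where
  "refl n adj i v = (\<lambda>k. v k - ip n adj (alpha i) v * alpha i k)"

inductive_set weyl :: "nat \<Rightarrow> (nat \<Rightarrow> nat \<Rightarrow> bool) \<Rightarrow> (vec \<Rightarrow> vec) set"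
  for n adj where
  weyl_id: "id \<in> weyl n adj"
| weyl_step: "w \<in> weyl n adj \<Longrightarrow> i \<in> nodes n \<Longrightarrow> refl n adj i \<circ> w \<in> weyl n adj"

definition spherical :: "nat \<Rightarrow> (nat \<Rightarrow> nat \<Rightarrow> bool) \<Rightarrow> bool" where
  "spherical n adj \<longleftrightarrow> finite (weyl n adj)"

inductive_set roots :: "nat \<Rightarrow> (nat \<Rightarrow> nat \<Rightarrow> bool) \<Rightarrow> vec set"
  for n adj where
  roots_simple: "i \<in> nodes n \<Longrightarrow> alpha i \<in> roots n adj"
| roots_refl: "v \<in> roots n adj \<Longrightarrow> i \<in> nodes n \<Longrightarrow> refl n adj i v \<in> roots n adj"

definition posroots :: "nat \<Rightarrow> (nat \<Rightarrow> nat \<Rightarrow> bool) \<Rightarrow> vec set" where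
  "posroots n adj = {v \<in> roots n adj. \<forall>k\<in>nodes n. v k \<ge> 0}"

definition moved :: "nat \<Rightarrow> (nat \<Rightarrow> nat \<Rightarrow> bool) \<Rightarrow> nat \<Rightarrow> vec \<Rightarrow> bool" where
  "moved n adj i \<beta> \<longleftrightarrow> ip n adj (alpha i) \<beta> = 1 \<or> ip n adj (alpha i) \<beta> = -1"

definition orth_set :: "nat \<Rightarrow> (nat \<Rightarrow> nat \<Rightarrow> bool) \<Rightarrow> vec set \<Rightarrow> bool" where
  "orth_set n adj B \<longleftrightarrow> B \<subseteq> posroots n adj \<and> (\<forall>\<beta>\<in>B. \<forall>\<gamma>\<in>B. \<beta> \<noteq> \<gamma> \<longrightarrow> ip n adj \<beta> \<gamma> = 0)"

definition act :: "nat \<Rightarrow> (nat \<Rightarrow> nat \<Rightarrow> bool) \<Rightarrow> (vec \<Rightarrow> vec) \<Rightarrow> vec set \<Rightarrow> vec set" where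
  "act n adj w B = posroots n adj \<inter> {v. \<exists>\<beta>\<in>B. v = w \<beta> \<or> v = (\<lambda>m. - w \<beta> m)}"

definition orbit :: "nat \<Rightarrow> (nat \<Rightarrow> nat \<Rightarrow> bool) \<Rightarrow> vec set \<Rightarrow> vec set set" where
  "orbit n adj B0 = {act n adj w B0 | w. w \<in> weyl n adj}"

definition admissible :: "nat \<Rightarrow> (nat \<Rightarrow> nat \<Rightarrow> bool) \<Rightarrow> vec set set \<Rightarrow> bool" where
  "admissible n adj \<B> \<longleftrightarrow>
     (\<forall>B\<in>\<B>. \<forall>i\<in>nodes n. \<forall>j\<in>nodes n. \<forall>\<gamma>.
        \<not> adj i j \<longrightarrow> \<gamma> \<in> B \<longrightarrow> (\<lambda>m. \<gamma> m - alpha i m + alpha j m) \<in> B \<longrightarrow>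
        act n adj (refl n adj i) B = act n adj (refl n adj j) B)"

definition prec :: "nat \<Rightarrow> vec set \<Rightarrow> vec set \<Rightarrow> bool" where
  "prec n B C \<longleftrightarrow> B \<noteq> C \<and> B - C \<noteq> {} \<and> C - B \<noteq> {} \<and>
     Min (height n ` (B - C)) < Min (height n ` (C - B))"

definition mless :: "nat \<Rightarrow> (nat \<Rightarrow> nat \<Rightarrow> bool) \<Rightarrow> vec set set \<Rightarrow> (vec set \<times> vec set) set" where
  "mless n adj \<B> = {(B, act n adj (refl n adj j) B) | B j.
       B \<in> \<B> \<and> j \<in> nodes n \<and> prec n B (act n adj (refl n adj j) B)}\<^sup>+"

end

theory Submission
  imports Defs
begin

text \<open>If beta is moved by i, then r_i beta lies in r_i B = r_k B, so r_k r_i beta is up to sign an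
  element gamma of B. Expanding (beta, r_k r_i beta) = 0 shows that (alpha_i, alpha_k) = 0, that beta
  is moved by k too, and that gamma = beta - (alpha_i, beta) alpha_i - (alpha_k, beta) alpha_k. If the
  pairing with alpha_j were +1 (j = i or k), then r_j B would agree with B below the height of
  beta - alpha_j and contain this new root, so r_j B would precede B in the lexicographic order by
  heights; but the order < refines that order and B < r_i B = r_k B. Hence both pairings are -1.
  Besides elementary facts on reflections, the only property of the root system used is that
  (alpha_j, x) \<in> {-1, 0, 1} for every positive root x \<noteq> alpha_j, which follows from finiteness.\<close>

lemma finite_nodes [simp]: "finite (nodes n)"
  by (simp add: nodes_def)

lemma ip_add_left: "ip n adj (\<lambda>m. u m + v m) w = ip n adj u w + ip n adj v w"
  by (simp add: ip_def algebra_simps sum.distrib)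

lemma ip_diff_left: "ip n adj (\<lambda>m. u m - v m) w = ip n adj u w - ip n adj v w"
  by (simp add: ip_def algebra_simps sum_subtractf)

lemma ip_mult_left: "ip n adj (\<lambda>m. t * u m) w = t * ip n adj u w"
  by (simp add: ip_def algebra_simps sum_distrib_left)

lemma ip_minus_left: "ip n adj (\<lambda>m. - u m) w = - ip n adj u w"
  by (simp add: ip_def sum_negf)

lemma ip_add_right: "ip n adj w (\<lambda>m. u m + v m) = ip n adj w u + ip n adj w v"
  by (simp add: ip_def algebra_simps sum.distrib)

lemma ip_diff_right: "ip n adj w (\<lambda>m. u m - v m) = ip n adj w u - ip n adj w v"
  by (simp add: ip_def algebra_simps sum_subtractf)

lemma ip_mult_right: "ip n adj w (\<lambda>m. t * u m) = t * ip n adj w u"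
  by (simp add: ip_def algebra_simps sum_distrib_left)

lemma ip_minus_right: "ip n adj w (\<lambda>m. - u m) = - ip n adj w u"
  by (simp add: ip_def sum_negf)

lemma ip_mult_const_left: "ip n adj (\<lambda>m. u m * t) w = ip n adj u w * t"
  by (simp add: ip_def algebra_simps sum_distrib_left sum_distrib_right)

lemma ip_mult_const_right: "ip n adj w (\<lambda>m. u m * t) = ip n adj w u * t"
  by (simp add: ip_def algebra_simps sum_distrib_left sum_distrib_right)

lemmas ip_linear = ip_add_left ip_diff_left ip_mult_left ip_minus_left ip_mult_const_left
  ip_add_right ip_diff_right ip_mult_right ip_minus_right ip_mult_const_right

lemma ip_commute:
  assumes "diagram n adj"
  shows "ip n adj v w = ip n adj w v"
proof -
  have "\<And>i j. i \<in> nodes n \<Longrightarrow> j \<in> nodes n \<Longrightarrow> cartan adj i j = cartan adj j i"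
    using assms by (auto simp: diagram_def cartan_def)
  then have "ip n adj v w = (\<Sum>i\<in>nodes n. \<Sum>j\<in>nodes n. w j * v i * cartan adj j i)"
    unfolding ip_def by (intro sum.cong refl) (simp add: mult.commute)
  also have "\<dots> = ip n adj w v"
    unfolding ip_def by (rule sum.swap)
  finally show ?thesis .
qed

lemma ip_alpha_left:
  assumes "i \<in> nodes n"
  shows "ip n adj (alpha i) v = (\<Sum>j\<in>nodes n. v j * cartan adj i j)"
proof -
  have "(\<Sum>j\<in>nodes n. alpha i l * v j * cartan adj l j)
      = (if l = i then (\<Sum>j\<in>nodes n. v j * cartan adj i j) else 0)" for l
    by (simp add: alpha_def)
  then show ?thesis
    using assms by (simp add: ip_def sum.delta)
qed

lemma ip_alpha_alpha:
  assumes "i \<in> nodes n" "j \<in> nodes n"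
  shows "ip n adj (alpha i) (alpha j) = cartan adj i j"
proof -
  have "alpha j l * cartan adj i l = (if l = j then cartan adj i j else 0)" for l
    by (simp add: alpha_def)
  then show ?thesis
    using assms by (simp add: ip_alpha_left sum.delta)
qed

lemma ip_alpha_self [simp]: "i \<in> nodes n \<Longrightarrow> ip n adj (alpha i) (alpha i) = 2"
  by (simp add: ip_alpha_alpha cartan_def)

lemma ip_zero_left: "\<forall>m\<in>nodes n. v m = 0 \<Longrightarrow> ip n adj v w = 0"
  by (simp add: ip_def)

lemma height_add: "height n (\<lambda>m. u m + v m) = height n u + height n v"
  by (simp add: height_def sum.distrib)

lemma height_diff: "height n (\<lambda>m. u m - v m) = height n u - height n v"
  by (simp add: height_def sum_subtractf)

lemma height_mult: "height n (\<lambda>m. t * u m) = t * height n u"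
  by (simp add: height_def sum_distrib_left)

lemma height_minus: "height n (\<lambda>m. - u m) = - height n u"
  by (simp add: height_def sum_negf)

lemma height_mult_const: "height n (\<lambda>m. u m * t) = height n u * t"
  by (simp add: height_def sum_distrib_right)

lemmas height_linear = height_add height_diff height_mult height_minus height_mult_const

lemma height_alpha: "i \<in> nodes n \<Longrightarrow> height n (alpha i) = 1"
  by (simp add: height_def alpha_def)

lemma refl_involutive: "i \<in> nodes n \<Longrightarrow> refl n adj i (refl n adj i v) = v"
  by (simp add: refl_def ip_linear)

lemma ip_refl_refl:
  assumes "diagram n adj" "i \<in> nodes n"
  shows "ip n adj (refl n adj i v) (refl n adj i w) = ip n adj v w"
  using assms by (simp add: refl_def ip_linear algebra_simps ip_commute[OF assms(1), of v "alpha i"])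

lemma refl_minus: "refl n adj i (\<lambda>m. - v m) = (\<lambda>m. - refl n adj i v m)"
  by (simp add: refl_def ip_linear)

lemma refl_orth: "ip n adj (alpha i) v = 0 \<Longrightarrow> refl n adj i v = v"
  by (simp add: refl_def)

lemma refl_alpha_self: "i \<in> nodes n \<Longrightarrow> refl n adj i (alpha i) = (\<lambda>m. - alpha i m)"
  by (simp add: refl_def)

lemma ip_root_self:
  assumes "diagram n adj" "v \<in> roots n adj"
  shows "ip n adj v v = 2"
  using assms(2) by induction (auto simp: ip_refl_refl[OF assms(1)])

lemma ip_weyl:
  assumes "diagram n adj" "w \<in> weyl n adj"
  shows "ip n adj (w u) (w v) = ip n adj u v"
  using assms(2) by induction (auto simp: ip_refl_refl[OF assms(1)])

definition root_refl :: "nat \<Rightarrow> (nat \<Rightarrow> nat \<Rightarrow> bool) \<Rightarrow> vec \<Rightarrow> vec \<Rightarrow> vec" where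
  "root_refl n adj v u = (\<lambda>m. u m - ip n adj v u * v m)"

lemma root_refl_refl_conj:
  assumes "diagram n adj" "i \<in> nodes n"
  shows "root_refl n adj (refl n adj i v) u = refl n adj i (root_refl n adj v (refl n adj i u))"
proof -
  have "ip n adj v (refl n adj i u) = ip n adj (refl n adj i v) u"
    using ip_refl_refl[OF assms, of v "refl n adj i u"] by (simp add: refl_involutive assms(2))
  then show ?thesis
    using assms(2) ip_commute[OF assms(1), of v "alpha i"]
    by (simp add: root_refl_def refl_def ip_linear algebra_simps)
qed

lemma root_refl_in_roots:
  assumes "diagram n adj" "v \<in> roots n adj" "u \<in> roots n adj"
  shows "root_refl n adj v u \<in> roots n adj"
  using assms(2,3)
proof (induction arbitrary: u rule: roots.induct)
  case (roots_simple j)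
  have "root_refl n adj (alpha j) u = refl n adj j u"
    by (simp add: root_refl_def refl_def mult.commute)
  then show ?case
    using roots_simple by (simp add: roots.roots_refl)
next
  case (roots_refl v i)
  then show ?case
    by (simp add: root_refl_refl_conj[OF assms(1)] roots.roots_refl)
qed

lemma roots_uminus:
  assumes "diagram n adj" "v \<in> roots n adj"
  shows "(\<lambda>m. - v m) \<in> roots n adj"
proof -
  have "root_refl n adj v v = (\<lambda>m. - v m)"
    by (simp add: root_refl_def ip_root_self[OF assms])
  then show ?thesis
    using root_refl_in_roots[OF assms assms(2)] by simp
qed

lemma roots_eq_weyl_image: "roots n adj = (\<lambda>(w, i). w (alpha i)) ` (weyl n adj \<times> nodes n)"
proof
  show "roots n adj \<subseteq> (\<lambda>(w, i). w (alpha i)) ` (weyl n adj \<times> nodes n)"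
  proof
    fix v
    assume "v \<in> roots n adj"
    then show "v \<in> (\<lambda>(w, i). w (alpha i)) ` (weyl n adj \<times> nodes n)"
    proof (induction rule: roots.induct)
      case (roots_simple i)
      then show ?case
        by (auto intro!: image_eqI[where x = "(id, i)"] weyl.intros)
    next
      case (roots_refl v i)
      then obtain w j where "w \<in> weyl n adj" "j \<in> nodes n" "v = w (alpha j)"
        by auto
      with roots_refl show ?case
        by (auto intro!: image_eqI[where x = "(refl n adj i \<circ> w, j)"] weyl.intros)
    qed
  qed
  show "(\<lambda>(w, i). w (alpha i)) ` (weyl n adj \<times> nodes n) \<subseteq> roots n adj"
  proof clarify
    fix w i
    assume "w \<in> weyl n adj" "i \<in> nodes n"
    then show "w (alpha i) \<in> roots n adj"
      by (induction rule: weyl.induct) (auto intro: roots.intros)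
  qed
qed

lemma finite_roots: "spherical n adj \<Longrightarrow> finite (roots n adj)"
  by (simp add: roots_eq_weyl_image spherical_def)

text \<open>If (u, v) = c \<ge> 2 then c v - u = - root_refl v u is again a root with (v, c v - u) = c, so
  u, v, c v - u, ... is an infinite sequence of roots along which w \<mapsto> s * w j grows without bound.\<close>

lemma roots_infinite_if_ip_ge_two:
  assumes "diagram n adj" "u \<in> roots n adj" "v \<in> roots n adj" "ip n adj u v \<ge> 2"
    and "0 \<le> s * u j" "s * u j < s * v j"
  shows "infinite (roots n adj)"
proof
  assume fin: "finite (roots n adj)"
  define c where "c = ip n adj u v"
  define f where "f = (\<lambda>w::vec. s * w j)"
  have unbounded: "\<exists>u'\<in>roots n adj. \<exists>v'\<in>roots n adj.
      ip n adj u' v' = c \<and> 0 \<le> f u' \<and> f u' < f v' \<and> int m \<le> f v'" for m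
  proof (induction m)
    case 0
    then show ?case
      using assms unfolding c_def f_def by fastforce
  next
    case (Suc m)
    then obtain u' v' where uv: "u' \<in> roots n adj" "v' \<in> roots n adj" "ip n adj u' v' = c"
      "0 \<le> f u'" "f u' < f v'" "int m \<le> f v'"
      by blast
    define w where "w = (\<lambda>m. c * v' m - u' m)"
    have "w = (\<lambda>m. - root_refl n adj v' u' m)"
      using uv(3) ip_commute[OF assms(1), of u' v'] by (simp add: w_def root_refl_def)
    then have "w \<in> roots n adj"
      by (simp add: roots_uminus root_refl_in_roots assms(1) uv(1,2))
    moreover have "ip n adj v' w = c"
      using uv(3) ip_commute[OF assms(1), of u' v'] ip_root_self[OF assms(1) uv(2)]
      by (simp add: w_def ip_linear)
    moreover have "2 * f v' \<le> c * f v'"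
      using uv(4,5) assms(4) unfolding c_def by (intro mult_right_mono) auto
    then have "f v' < f w"
      using uv(5) by (simp add: w_def f_def algebra_simps)
    ultimately show ?case
      using uv by (intro bexI[of _ v'] bexI[of _ w]) auto
  qed
  define M where "M = Max (f ` roots n adj)"
  obtain v' where "v' \<in> roots n adj" "int (nat (M + 1)) \<le> f v'"
    using unbounded by blast
  moreover have "f v' \<le> M"
    using fin \<open>v' \<in> roots n adj\<close> unfolding M_def by simp
  ultimately show False
    by linarith
qed

lemma root_eq_alpha_if_ip_ge_two:
  assumes "diagram n adj" "spherical n adj" "x \<in> roots n adj" "i \<in> nodes n"
    and "ip n adj (alpha i) x \<ge> 2"
  shows "x = alpha i"
proof (cases "\<exists>j\<noteq>i. x j \<noteq> 0")
  case True
  then obtain j where "j \<noteq> i" "x j \<noteq> 0"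
    by blast
  then have "0 < x j * x j"
    by (auto simp: zero_less_mult_iff linorder_neq_iff)
  moreover have "x j * alpha i j = 0"
    using \<open>j \<noteq> i\<close> by (simp add: alpha_def)
  ultimately have "infinite (roots n adj)"
    using assms roots.roots_simple[OF assms(4)]
    by (intro roots_infinite_if_ip_ge_two[where u = "alpha i" and v = x and s = "x j" and j = j]) auto
  then show ?thesis
    using finite_roots[OF assms(2)] by contradiction
next
  case False
  then have x: "x = (\<lambda>m. x i * alpha i m)"
    by (auto simp: alpha_def fun_eq_iff)
  have "x i * x i * 2 = 2"
    using ip_root_self[OF assms(1,3)] assms(4) by (subst (asm) (1 2) x) (simp add: ip_linear)
  moreover have "x i * 2 \<ge> 2"
    using assms(4,5) by (subst (asm) x) (simp add: ip_linear)
  ultimately have "x i = 1"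
    by (auto simp: zmult_eq_1_iff)
  then show ?thesis
    using x by simp
qed

lemma posroot_ip_alpha_cases:
  assumes "diagram n adj" "spherical n adj" "x \<in> posroots n adj" "i \<in> nodes n"
  shows "moved n adj i x \<or> ip n adj (alpha i) x = 0 \<or> x = alpha i"
proof -
  have x: "x \<in> roots n adj" "\<forall>m\<in>nodes n. x m \<ge> 0"
    using assms(3) by (auto simp: posroots_def)
  have "ip n adj (alpha i) x > -2"
  proof (rule ccontr)
    assume "\<not> ip n adj (alpha i) x > -2"
    then have "(\<lambda>m. - x m) = alpha i"
      using assms(1,2,4) roots_uminus[OF assms(1) x(1)]
      by (intro root_eq_alpha_if_ip_ge_two) (auto simp: ip_linear)
    then have "x i = -1"
      by (metis add.inverse_inverse alpha_def)
    then show False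
      using x(2) assms(4) by force
  qed
  then have "ip n adj (alpha i) x \<ge> 2 \<or> ip n adj (alpha i) x \<in> {-1, 0, 1}"
    by auto
  moreover have "ip n adj (alpha i) x \<ge> 2 \<Longrightarrow> x = alpha i"
    using root_eq_alpha_if_ip_ge_two[OF assms(1,2) x(1) assms(4)] .
  ultimately show ?thesis
    unfolding moved_def by blast
qed

lemma ip_alpha_le_twice_coord:
  assumes "\<forall>m\<in>nodes n. b m \<ge> 0" "i \<in> nodes n"
  shows "ip n adj (alpha i) b \<le> 2 * b i"
proof -
  have "ip n adj (alpha i) b = b i * cartan adj i i + (\<Sum>j\<in>nodes n - {i}. b j * cartan adj i j)"
    using assms(2) by (simp add: ip_alpha_left sum.remove)
  moreover have "(\<Sum>j\<in>nodes n - {i}. b j * cartan adj i j) \<le> 0"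
    using assms(1) by (intro sum_nonpos) (auto simp: cartan_def)
  ultimately show ?thesis
    by (simp add: cartan_def)
qed

lemma ip_alpha_le_coord:
  assumes "\<forall>m\<in>nodes n. b m \<ge> 0" "i \<in> nodes n" "ip n adj (alpha i) b \<le> 1"
  shows "ip n adj (alpha i) b \<le> b i"
  using ip_alpha_le_twice_coord[OF assms(1,2), of adj] assms by (cases "b i \<ge> 1") auto

lemma posroot_height_pos:
  assumes "diagram n adj" "v \<in> posroots n adj"
  shows "height n v \<ge> 1"
proof (rule ccontr)
  assume "\<not> height n v \<ge> 1"
  then have "(\<Sum>m\<in>nodes n. v m) = 0"
    using assms(2) unfolding height_def posroots_def by (simp add: sum_nonneg antisym)
  then have "\<forall>m\<in>nodes n. v m = 0"
    using assms(2) by (simp add: posroots_def sum_nonneg_eq_0_iff)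
  then have "ip n adj v v = 0"
    by (rule ip_zero_left)
  then show False
    using ip_root_self[OF assms(1)] assms(2) by (simp add: posroots_def)
qed

lemma coord_add_coord_le_height:
  assumes "\<forall>m\<in>nodes n. b m \<ge> 0" "i \<in> nodes n" "k \<in> nodes n" "i \<noteq> k"
  shows "b i + b k \<le> height n b"
proof -
  have "(\<Sum>m\<in>{i, k}. b m) \<le> (\<Sum>m\<in>nodes n. b m)"
    using assms by (intro sum_mono2) auto
  then show ?thesis
    using assms(4) by (simp add: height_def)
qed

lemma posroot_uminus_not_posroot:
  assumes "diagram n adj" "v \<in> posroots n adj"
  shows "(\<lambda>m. - v m) \<notin> posroots n adj"
proof
  assume "(\<lambda>m. - v m) \<in> posroots n adj"
  then have "height n (\<lambda>m. - v m) \<ge> 1"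
    by (rule posroot_height_pos[OF assms(1)])
  then show False
    using posroot_height_pos[OF assms] by (simp add: height_minus)
qed

lemma refl_posroot:
  assumes "x \<in> posroots n adj" "j \<in> nodes n" "moved n adj j x"
  shows "refl n adj j x \<in> posroots n adj"
proof -
  have x: "x \<in> roots n adj" "\<forall>m\<in>nodes n. x m \<ge> 0"
    using assms(1) by (auto simp: posroots_def)
  have "ip n adj (alpha j) x \<le> x j"
    using assms(3) by (intro ip_alpha_le_coord[OF x(2) assms(2)]) (auto simp: moved_def)
  then have "\<forall>m\<in>nodes n. refl n adj j x m \<ge> 0"
    using x(2) assms(3) by (auto simp: refl_def alpha_def moved_def)
  then show ?thesis
    using x(1) assms(2) by (simp add: posroots_def roots.roots_refl)
qed

lemma orth_set_orbit:
  assumes "diagram n adj" "orth_set n adj B0" "B \<in> orbit n adj B0"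
  shows "orth_set n adj B"
proof -
  obtain w where w: "w \<in> weyl n adj" "B = act n adj w B0"
    using assms(3) by (auto simp: orbit_def)
  have "ip n adj x y = 0" if xy: "x \<in> B" "y \<in> B" "x \<noteq> y" for x y
  proof -
    obtain b where b: "b \<in> B0" "x = w b \<or> x = (\<lambda>m. - w b m)"
      using xy(1) unfolding w(2) act_def by blast
    obtain c where c: "c \<in> B0" "y = w c \<or> y = (\<lambda>m. - w c m)"
      using xy(2) unfolding w(2) act_def by blast
    have "x \<in> posroots n adj" "y \<in> posroots n adj"
      using xy w(2) by (auto simp: act_def)
    then have "b \<noteq> c"
      using b c xy(3) posroot_uminus_not_posroot[OF assms(1)] by fastforce
    then have "ip n adj (w b) (w c) = 0"
      using ip_weyl[OF assms(1) w(1)] assms(2) b(1) c(1) by (simp add: orth_set_def)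
    then show ?thesis
      using b(2) c(2) by (auto simp: ip_linear)
  qed
  then show ?thesis
    using w(2) by (auto simp: orth_set_def act_def)
qed

lemma unmoved_in_act_refl:
  assumes "diagram n adj" "spherical n adj" "B \<subseteq> posroots n adj" "x \<in> B" "j \<in> nodes n"
    and "\<not> moved n adj j x"
  shows "x \<in> act n adj (refl n adj j) B"
proof -
  have x: "x \<in> posroots n adj"
    using assms(3,4) by blast
  then consider "ip n adj (alpha j) x = 0" | "x = alpha j"
    using posroot_ip_alpha_cases[OF assms(1,2) x assms(5)] assms(6) by blast
  then show ?thesis
  proof cases
    case 1
    then show ?thesis
      using x assms(4) unfolding act_def by (auto simp: refl_orth intro!: bexI[of _ x])
  next
    case 2
    then show ?thesis
      using x assms(4,5) unfolding act_def by (auto simp: refl_alpha_self intro!: bexI[of _ x])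
  qed
qed

lemma act_refl_new_element:
  assumes "diagram n adj" "spherical n adj" "B \<subseteq> posroots n adj" "j \<in> nodes n"
    and "y \<in> act n adj (refl n adj j) B" "y \<notin> B"
  shows "\<exists>x\<in>B. moved n adj j x \<and> height n x \<le> height n y + 1"
proof -
  have y: "y \<in> posroots n adj"
    using assms(5) by (simp add: act_def)
  obtain x where x: "x \<in> B" "y = refl n adj j x \<or> y = (\<lambda>m. - refl n adj j x m)"
    using assms(5) unfolding act_def by blast
  have xpos: "x \<in> posroots n adj"
    using x(1) assms(3) by blast
  consider "ip n adj (alpha j) x = 0" | "x = alpha j" | "moved n adj j x"
    using posroot_ip_alpha_cases[OF assms(1,2) xpos assms(4)] by blast
  then show ?thesis
  proof cases
    case 1
    then show ?thesis
      using x y assms(6) posroot_uminus_not_posroot[OF assms(1) xpos] by (auto simp: refl_orth)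
  next
    case 2
    then show ?thesis
      using x y assms(4,6) posroot_uminus_not_posroot[OF assms(1) xpos] by (auto simp: refl_alpha_self)
  next
    case 3
    have "refl n adj j x \<in> posroots n adj"
      by (rule refl_posroot[OF xpos assms(4) 3])
    then have "y = refl n adj j x"
      using x(2) y posroot_uminus_not_posroot[OF assms(1)] by blast
    then have "height n y = height n x - ip n adj (alpha j) x"
      using assms(4) by (simp add: refl_def height_linear height_alpha)
    with 3 x(1) show ?thesis
      by (auto simp: moved_def)
  qed
qed

text \<open>A weakening of prec (the second set may be contained in the first) which, unlike prec,
  is transitive.\<close>

definition lex_prec :: "nat \<Rightarrow> vec set \<Rightarrow> vec set \<Rightarrow> bool" where
  "lex_prec n X Y \<longleftrightarrow> (\<exists>h. (\<forall>x. height n x < h \<longrightarrow> (x \<in> X \<longleftrightarrow> x \<in> Y)) \<and>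
     {x \<in> Y. height n x = h} \<subset> {x \<in> X. height n x = h})"

lemma lex_prec_irrefl: "\<not> lex_prec n X X"
  by (simp add: lex_prec_def)

lemma lex_prec_trans:
  assumes "lex_prec n X Y" "lex_prec n Y Z"
  shows "lex_prec n X Z"
proof -
  obtain h1 where h1: "\<forall>x. height n x < h1 \<longrightarrow> (x \<in> X \<longleftrightarrow> x \<in> Y)"
    "{x \<in> Y. height n x = h1} \<subset> {x \<in> X. height n x = h1}"
    using assms(1) by (auto simp: lex_prec_def)
  obtain h2 where h2: "\<forall>x. height n x < h2 \<longrightarrow> (x \<in> Y \<longleftrightarrow> x \<in> Z)"
    "{x \<in> Z. height n x = h2} \<subset> {x \<in> Y. height n x = h2}"
    using assms(2) by (auto simp: lex_prec_def)
  define h where "h = min h1 h2"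
  have "\<forall>x. height n x < h \<longrightarrow> (x \<in> X \<longleftrightarrow> x \<in> Z)"
    using h1(1) h2(1) by (simp add: h_def)
  moreover have "{x \<in> Z. height n x = h} \<subset> {x \<in> X. height n x = h}"
  proof (cases h1 h2 rule: linorder_cases)
    case less
    then have "{x \<in> Z. height n x = h1} = {x \<in> Y. height n x = h1}"
      using h2(1) by auto
    then show ?thesis
      using h1(2) less by (simp add: h_def)
  next
    case equal
    then show ?thesis
      using h1(2) h2(2) by (simp add: h_def)
  next
    case greater
    then have "{x \<in> X. height n x = h2} = {x \<in> Y. height n x = h2}"
      using h1(1) by auto
    then show ?thesis
      using h2(2) greater by (simp add: h_def)
  qed
  ultimately show ?thesis
    unfolding lex_prec_def by blast
qed

lemma prec_imp_lex_prec:
  assumes "prec n X Y" "finite X" "finite Y"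
  shows "lex_prec n X Y"
proof -
  define h where "h = Min (height n ` (X - Y))"
  have ne: "X - Y \<noteq> {}" and less: "h < Min (height n ` (Y - X))"
    using assms(1) by (auto simp: prec_def h_def)
  have XY: "height n x \<ge> h" if "x \<in> X - Y" for x
    unfolding h_def using assms(2) that by simp
  have YX: "height n x > h" if "x \<in> Y - X" for x
    using assms(3) that less by (meson Min_le finite_Diff finite_imageI image_eqI order.strict_trans2)
  have "h \<in> height n ` (X - Y)"
    unfolding h_def using assms(2) ne by (intro Min_in) auto
  then obtain x0 where "x0 \<in> X - Y" "height n x0 = h"
    by blast
  then show ?thesis
    unfolding lex_prec_def using XY YX by (intro exI[of _ h] conjI allI impI) force+
qed

lemma mless_imp_lex_prec:
  assumes "finite (posroots n adj)" "\<forall>B\<in>\<B>. B \<subseteq> posroots n adj" "(X, Y) \<in> mless n adj \<B>"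
  shows "lex_prec n X Y"
proof -
  have prec_step: "lex_prec n B (act n adj (refl n adj j) B)"
    if "B \<in> \<B>" "prec n B (act n adj (refl n adj j) B)" for B j
    using that assms(1,2) by (intro prec_imp_lex_prec) (auto simp: act_def intro: finite_subset)
  show ?thesis
    using assms(3) unfolding mless_def
  proof (induction rule: trancl_induct)
    case (base Y)
    then show ?case
      using prec_step by blast
  next
    case (step Y Z)
    then show ?case
      using lex_prec_trans prec_step by blast
  qed
qed

lemma act_refl_lex_prec:
  assumes "diagram n adj" "spherical n adj" "orth_set n adj B" "\<beta> \<in> B" "j \<in> nodes n"
    and "ip n adj (alpha j) \<beta> = 1"
    and "\<forall>x\<in>B. moved n adj j x \<longrightarrow> height n \<beta> \<le> height n x"
  shows "lex_prec n (act n adj (refl n adj j) B) B"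
proof -
  define A where "A = act n adj (refl n adj j) B"
  define h where "h = height n \<beta> - 1"
  have pos: "B \<subseteq> posroots n adj"
    using assms(3) by (simp add: orth_set_def)
  have BA: "x \<in> A" if "x \<in> B" "height n x \<le> h" for x
    using that assms(7) unfolding A_def h_def
    by (intro unmoved_in_act_refl[OF assms(1,2) pos _ assms(5)]) force+
  have AB: "x \<in> B" if "x \<in> A" "height n x < h" for x
    using that act_refl_new_element[OF assms(1,2) pos assms(5), of x] assms(7)
    unfolding A_def h_def by force
  define v where "v = (\<lambda>m. \<beta> m - alpha j m)"
  have "v = refl n adj j \<beta>"
    using assms(6) by (simp add: v_def refl_def)
  then have "v \<in> A"
    using refl_posroot[of \<beta> n adj j] pos assms(4,5,6)
    unfolding A_def act_def by (auto simp: moved_def)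
  moreover have "height n v = h"
    using assms(5) by (simp add: v_def h_def height_linear height_alpha)
  moreover have "v \<notin> B"
  proof
    assume "v \<in> B"
    moreover have "v \<noteq> \<beta>"
      by (auto simp: v_def alpha_def fun_eq_iff)
    ultimately have "ip n adj \<beta> v = 0"
      using assms(3,4) by (auto simp: orth_set_def)
    moreover have "ip n adj \<beta> v = 1"
      using ip_root_self[OF assms(1), of \<beta>] pos assms(4,6) ip_commute[OF assms(1), of \<beta> "alpha j"]
      by (auto simp: v_def ip_linear posroots_def)
    ultimately show False
      by simp
  qed
  ultimately have "{x \<in> B. height n x = h} \<subset> {x \<in> A. height n x = h}"
    using BA by blast
  then show ?thesis
    unfolding lex_prec_def A_def[symmetric] using AB BA by (intro exI[of _ h]) force
qed

lemma ip_alpha_eq_neg_one_if_lex_prec_act_refl: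
  assumes "diagram n adj" "spherical n adj" "orth_set n adj B" "\<beta> \<in> B" "j \<in> nodes n"
    and "moved n adj j \<beta>" "\<forall>x\<in>B. moved n adj j x \<longrightarrow> height n \<beta> \<le> height n x"
    and "lex_prec n B (act n adj (refl n adj j) B)"
  shows "ip n adj (alpha j) \<beta> = -1"
proof (rule ccontr)
  assume "ip n adj (alpha j) \<beta> \<noteq> -1"
  then have "ip n adj (alpha j) \<beta> = 1"
    using assms(6) by (simp add: moved_def)
  then have "lex_prec n (act n adj (refl n adj j) B) B"
    using act_refl_lex_prec[OF assms(1-5) _ assms(7)] by blast
  then show False
    using assms(8) lex_prec_trans lex_prec_irrefl by blast
qed

lemma refl_refl_orth_imp_cartan_zero:
  assumes "diagram n adj" "\<beta> \<in> roots n adj" "i \<in> nodes n" "k \<in> nodes n" "moved n adj i \<beta>"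
    and "ip n adj \<beta> (refl n adj k (refl n adj i \<beta>)) = 0"
  shows "cartan adj k i = 0 \<and> moved n adj k \<beta>"
proof -
  define \<epsilon> where "\<epsilon> = ip n adj (alpha i) \<beta>"
  define d where "d = ip n adj (alpha k) \<beta>"
  define a where "a = cartan adj k i"
  have "refl n adj k (refl n adj i \<beta>) = (\<lambda>m. \<beta> m - \<epsilon> * alpha i m - (d - \<epsilon> * a) * alpha k m)"
    using assms(3,4) by (simp add: refl_def ip_linear ip_alpha_alpha \<epsilon>_def d_def a_def algebra_simps)
  moreover have "ip n adj \<beta> (alpha i) = \<epsilon>" "ip n adj \<beta> (alpha k) = d"
    using ip_commute[OF assms(1)] by (auto simp: \<epsilon>_def d_def)
  moreover have "\<epsilon> * \<epsilon> = 1"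
    using assms(5) by (auto simp: moved_def \<epsilon>_def)
  ultimately have "d * (d - \<epsilon> * a) = 1"
    using assms(6) ip_root_self[OF assms(1,2)] by (simp add: ip_linear algebra_simps)
  then have "d = 1 \<or> d = -1" "\<epsilon> * a = 0"
    by (auto simp: zmult_eq_1_iff)
  then show ?thesis
    using \<open>\<epsilon> * \<epsilon> = 1\<close> by (auto simp: moved_def d_def a_def)
qed

lemma uminus_diff_moves_not_posroot:
  assumes "diagram n adj" "\<beta> \<in> posroots n adj" "i \<in> nodes n" "k \<in> nodes n" "i \<noteq> k"
    and "moved n adj i \<beta>" "moved n adj k \<beta>"
  shows "(\<lambda>m. - (\<beta> m - ip n adj (alpha i) \<beta> * alpha i m - ip n adj (alpha k) \<beta> * alpha k m))
    \<notin> posroots n adj" (is "(\<lambda>m. - ?g m) \<notin> _")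
proof
  assume "(\<lambda>m. - ?g m) \<in> posroots n adj"
  then have "height n (\<lambda>m. - ?g m) \<ge> 1"
    by (rule posroot_height_pos[OF assms(1)])
  have nonneg: "\<forall>m\<in>nodes n. \<beta> m \<ge> 0"
    using assms(2) by (simp add: posroots_def)
  have "ip n adj (alpha i) \<beta> \<le> \<beta> i" "ip n adj (alpha k) \<beta> \<le> \<beta> k"
    using assms(3,4,6,7) by (auto intro!: ip_alpha_le_coord[OF nonneg] simp: moved_def)
  then have "height n ?g \<ge> 0"
    using coord_add_coord_le_height[OF nonneg assms(3-5)] assms(3,4)
    by (simp add: height_linear height_alpha)
  with \<open>height n (\<lambda>m. - ?g m) \<ge> 1\<close> show False
    using assms(3,4) by (simp add: height_linear height_alpha)
qed

lemma refl_refl_in_act_eq: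
  assumes "B \<subseteq> posroots n adj" "i \<in> nodes n" "k \<in> nodes n"
    and "act n adj (refl n adj i) B = act n adj (refl n adj k) B"
    and "\<beta> \<in> B" "moved n adj i \<beta>"
  shows "\<exists>\<gamma>\<in>B. refl n adj k (refl n adj i \<beta>) = \<gamma> \<or> refl n adj k (refl n adj i \<beta>) = (\<lambda>m. - \<gamma> m)"
proof -
  have "refl n adj i \<beta> \<in> act n adj (refl n adj k) B"
    using refl_posroot[of \<beta> n adj i] assms unfolding act_def by blast
  then obtain \<gamma> where "\<gamma> \<in> B"
    and "refl n adj i \<beta> = refl n adj k \<gamma> \<or> refl n adj i \<beta> = (\<lambda>m. - refl n adj k \<gamma> m)"
    unfolding act_def by blast
  then show ?thesis
    by (auto simp: refl_minus refl_involutive[OF assms(3)])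
qed

lemma act_refl_eq_moved:
  assumes "diagram n adj" "orth_set n adj B" "i \<in> nodes n" "k \<in> nodes n" "i \<noteq> k"
    and "act n adj (refl n adj i) B = act n adj (refl n adj k) B"
    and "\<beta> \<in> B" "moved n adj i \<beta>"
  shows "\<not> adj i k \<and> moved n adj k \<beta> \<and>
    (\<lambda>m. \<beta> m - ip n adj (alpha i) \<beta> * alpha i m - ip n adj (alpha k) \<beta> * alpha k m) \<in> B"
proof -
  define g where "g = refl n adj k (refl n adj i \<beta>)"
  have pos: "B \<subseteq> posroots n adj"
    using assms(2) by (simp add: orth_set_def)
  obtain \<gamma> where \<gamma>: "\<gamma> \<in> B" "g = \<gamma> \<or> g = (\<lambda>m. - \<gamma> m)"
    using refl_refl_in_act_eq[OF pos assms(3,4,6-8)] unfolding g_def by blast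
  have "\<gamma> \<noteq> \<beta>"
  proof
    assume "\<gamma> = \<beta>"
    then have "g i = \<beta> i \<or> g i = - \<beta> i"
      using \<gamma>(2) by auto
    moreover have "g i = \<beta> i - ip n adj (alpha i) \<beta>"
      using assms(5) by (simp add: g_def refl_def alpha_def)
    ultimately show False
      using assms(8) unfolding moved_def by presburger
  qed
  then have "ip n adj \<beta> g = 0"
    using \<gamma> assms(2,7) by (auto simp: orth_set_def ip_linear)
  then have orth: "cartan adj k i = 0" and moved: "moved n adj k \<beta>"
    using refl_refl_orth_imp_cartan_zero[OF assms(1) _ assms(3,4,8)] pos assms(7)
    by (auto simp: g_def posroots_def)
  then have "\<not> adj i k"
    using assms(1,3,4,5) by (auto simp: diagram_def cartan_def)
  have g: "g = (\<lambda>m. \<beta> m - ip n adj (alpha i) \<beta> * alpha i m - ip n adj (alpha k) \<beta> * alpha k m)"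
    using orth assms(3,4) by (simp add: g_def refl_def ip_linear ip_alpha_alpha algebra_simps)
  have "(\<lambda>m. - g m) \<notin> posroots n adj"
    unfolding g using uminus_diff_moves_not_posroot[OF assms(1) _ assms(3-5,8) moved] pos assms(7)
    by blast
  then have "g = \<gamma>"
    using \<gamma> pos by auto
  then show ?thesis
    using \<open>\<not> adj i k\<close> moved \<gamma>(1) g by simp
qed

theorem lemma3p3:
  fixes n :: nat and adj :: "nat \<Rightarrow> nat \<Rightarrow> bool" and B0 B :: "vec set"
    and i k :: nat and \<beta> :: vec
  assumes "diagram n adj" and "spherical n adj"
    and "orth_set n adj B0"
    and "admissible n adj (orbit n adj B0)"
    and "B \<in> orbit n adj B0"
    and "i \<in> nodes n" and "k \<in> nodes n" and "i \<noteq> k"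
    and "act n adj (refl n adj i) B = act n adj (refl n adj k) B"
    and "(B, act n adj (refl n adj i) B) \<in> mless n adj (orbit n adj B0)"
    and "\<beta> \<in> B" and "moved n adj i \<beta> \<or> moved n adj k \<beta>"
    and "\<forall>\<gamma>\<in>B. (moved n adj i \<gamma> \<or> moved n adj k \<gamma>) \<longrightarrow> height n \<beta> \<le> height n \<gamma>"
  shows "(\<lambda>m. \<beta> m + alpha i m + alpha k m) \<in> B \<and> \<not> adj i k"
proof -
  have B: "orth_set n adj B"
    using orth_set_orbit[OF assms(1,3,5)] .
  have "finite (posroots n adj)"
    using finite_roots[OF assms(2)] by (simp add: posroots_def)
  moreover have "\<forall>C\<in>orbit n adj B0. C \<subseteq> posroots n adj"
    by (auto simp: orbit_def act_def)
  ultimately have below: "lex_prec n B (act n adj (refl n adj j) B)" if "j \<in> {i, k}" for j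
    using mless_imp_lex_prec assms(9,10) that by auto
  have moved_i: "moved n adj i \<beta>"
    using assms(12) act_refl_eq_moved[OF assms(1) B assms(7,6) assms(8)[symmetric] assms(9)[symmetric] assms(11)]
    by blast
  then have "\<not> adj i k" and moved_k: "moved n adj k \<beta>"
    and "(\<lambda>m. \<beta> m - ip n adj (alpha i) \<beta> * alpha i m - ip n adj (alpha k) \<beta> * alpha k m) \<in> B"
    using act_refl_eq_moved[OF assms(1) B assms(6-9,11)] by auto
  moreover have "ip n adj (alpha i) \<beta> = -1" "ip n adj (alpha k) \<beta> = -1"
    using ip_alpha_eq_neg_one_if_lex_prec_act_refl[OF assms(1,2) B assms(11)] below
      moved_i moved_k assms(6,7,13) by auto
  ultimately show ?thesis
    by simp
qed

end
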